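(* Assume (A1)–(A4) and let $b$ be consistent. Let $x^*$ be the unique solution of $\min\{f(Wx): x\in\mathscr D(W),\ Ax=b\}$ and let $y^*=Wx^*$. Then the ADMM iterates satisfy, as $k\to\infty$, $$x_k\to x^*,\quad y_k\to y^*,\quad Wx_k\to y^*,\quad f(y_k)\to f(y^* ),\quad D_{\mu_k}f(y^*,y_k)\to0.$$
   Context: $\mathcal X,\mathcal Y,\mathcal H$ are real Hilbert spaces. Standing assumptions: (A1) $A:\mathcal X\to\mathcal H$ is bounded linear. (A2) $f:\mathcal Y\to(-\infty,\infty]$ is proper, lower semicontinuous and strongly convex with constant $c_0>0$: $f(ty_1+(1-t)y_2)+c_0t(1-t)\|y_1-y_2\|^2\le tf(y_1)+(1-t)f(y_2)$ for all $y_1,y_2$, $t\in[0,1]$. (A3) $W:\mathscr D(W)\subset\mathcal X\to\mathcal Y$ is a densely defined closed linear operator. (A4) There is $c_1>0$ with $\|Ax\|^2+\|Wx\|^2\ge c_1\|x\|^2$ for all $x\in\mathscr D(W)$. $\mathscr D(f)=\{y:f(y)<\infty\}$; $b$ is consistent if $b=Ax$ for some $x\in\mathscr D(W)$ with $Wx\in\mathscr D(f)$. ADMM: fix $\rho_1,\rho_2>0$ and initial $y_0\in\mathcal Y$, $\lambda_0\in\mathcal H$, $\mu_0\in\mathcal Y$. For $k=0,1,\dots$: $x_{k+1}=\arg\min_{x\in\mathscr D(W)}\{\langle\lambda_k,Ax\rangle+\langle\mu_k,Wx\rangle+\frac{\rho_1}{2}\|Ax-b\|^2+\frac{\rho_2}{2}\|Wx-y_k\|^2\}$,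 $y_{k+1}=\arg\min_{y\in\mathcal Y}\{f(y)-\langle\mu_k,y\rangle+\frac{\rho_2}{2}\|Wx_{k+1}-y\|^2\}$, $\lambda_{k+1}=\lambda_k+\rho_1(Ax_{k+1}-b)$, $\mu_{k+1}=\mu_k+\rho_2(Wx_{k+1}-y_{k+1})$. (These minimizers exist and are unique.) One has $\mu_k\in\partial f(y_k)$ for $k\ge1$. Bregman distance: for $y$ with $\mu\in\partial f(y)$, $D_\mu f(\bar y,y)=f(\bar y)-f(y)-\langle\mu,\bar y-y\rangle$. *)

theory Defs
  imports "HOL-Analysis.Analysis"
begin

definition proper_fun :: "('a \<Rightarrow> ereal) \<Rightarrow> bool" where
  "proper_fun f \<longleftrightarrow> (\<forall>y. f y \<noteq> -\<infinity>) \<and> (\<exists>y. f y \<noteq> \<infinity>)"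

definition lsc_fun :: "('a::topological_space \<Rightarrow> ereal) \<Rightarrow> bool" where
  "lsc_fun f \<longleftrightarrow> (\<forall>c::real. closed {y. f y \<le> ereal c})"

definition strongly_convex :: "real \<Rightarrow> ('a::real_normed_vector \<Rightarrow> ereal) \<Rightarrow> bool" where
  "strongly_convex c0 f \<longleftrightarrow>
     (\<forall>y1 y2 t. 0 \<le> t \<and> t \<le> 1 \<longrightarrow>
        f (t *\<^sub>R y1 + (1 - t) *\<^sub>R y2) + ereal (c0 * t * (1 - t) * (norm (y1 - y2))\<^sup>2)
          \<le> ereal t * f y1 + ereal (1 - t) * f y2)"

definition dd_closed_linear_op :: "'a::real_normed_vector set \<Rightarrow> ('a \<Rightarrow> 'b::real_normed_vector) \<Rightarrow> bool" where
  "dd_closed_linear_op D W \<longleftrightarrow>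
     subspace D \<and>
     (\<forall>x\<in>D. \<forall>z\<in>D. W (x + z) = W x + W z) \<and>
     (\<forall>x\<in>D. \<forall>c. W (c *\<^sub>R x) = c *\<^sub>R W x) \<and>
     closure D = UNIV \<and>
     closed {(x, W x) | x. x \<in> D}"

definition bregman :: "('a::real_inner \<Rightarrow> ereal) \<Rightarrow> 'a \<Rightarrow> 'a \<Rightarrow> 'a \<Rightarrow> ereal" where
  "bregman f mu ybar y = f ybar - f y - ereal (inner mu (ybar - y))"

end

theory Submission
  imports Defs
begin

text \<open>
The optimality conditions of the two subproblems say that mu_k is a subgradient of f at y_k
and that lambda_k A + (mu_k + rho2 (y_k - y_(k-1))) W vanishes on D. Together with strong
convexity of f they give two descent inequalities: the residual energy
rho1/2 |A x_k - b|^2 + rho2/2 |W x_k - y_k|^2 + rho2/2 |y_k - y_(k-1)|^2 decreases by at least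
2 c0 |y_(k+1) - y_k|^2, and a Lyapunov function built from the Bregman distance
D_k = D_(mu_k) f (y*, y_k) is quasi-Fejer with summable errors. Hence all residuals are square
summable, and since the energy is monotone it is even o(1/k). This rate controls the
multipliers, which are partial sums of residuals: by Cauchy-Schwarz
|sum_(j=p..l-1) r_(j+1)| |r_l| <= (sum_(j>p) |r_j|^2)^(1/2) (l |r_l|^2)^(1/2) tends to 0.
It yields <mu_k, y* - y_k> -> 0 and, through the strong convexity estimate
c0 |y_l - y_p|^2 <= D_p - D_l - <lambda_l - lambda_p, A x_l - b> - <mu_l - mu_p, W x_l - y_l> + ...,
that (y_k) is a Cauchy sequence. By (A4) and closedness of W the iterates x_k converge to a
feasible point; lower semicontinuity of f and optimality of x* identify the limit with x* and
force D_k -> 0.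
\<close>

lemma norm_add_scaleR_sq:
  fixes u v :: "'a::real_inner"
  shows "(norm (u + t *\<^sub>R v))\<^sup>2 = (norm u)\<^sup>2 + 2 * t * inner u v + t\<^sup>2 * (norm v)\<^sup>2"
  unfolding power2_norm_eq_inner
  by (simp add: inner_add_left inner_add_right inner_commute power2_eq_square algebra_simps)

lemma inner_le_Young:
  fixes u v :: "'a::real_inner"
  assumes e: "e > 0"
  shows "inner u v \<le> e * (norm u)\<^sup>2 + (norm v)\<^sup>2 / (4 * e)"
proof -
  have "0 \<le> (norm ((2 * e) *\<^sub>R u - v))\<^sup>2" by simp
  also have "\<dots> = 4 * e * (e * (norm u)\<^sup>2 + (norm v)\<^sup>2 / (4 * e) - inner u v)"
    unfolding power2_norm_eq_inner using e
    by (simp add: inner_diff_left inner_diff_right inner_commute power2_eq_square field_simps)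
  finally show ?thesis using e by (simp add: zero_le_mult_iff)
qed

lemma inner_le_half_sq:
  fixes u v :: "'a::real_inner"
  shows "inner u v \<le> (norm u)\<^sup>2 / 2 + (norm v)\<^sup>2 / 2"
  using inner_le_Young[of "1/2" u v] by simp

lemma linear_coeff_zero_if_quadratic_nonneg:
  fixes L Q :: real
  assumes "Q \<ge> 0" and nonneg: "\<And>t. t * L + t\<^sup>2 * Q \<ge> 0"
  shows "L = 0"
proof (rule ccontr)
  assume "L \<noteq> 0"
  define t where "t = - L / (Q + 1)"
  have "Q + 1 > 0" using \<open>Q \<ge> 0\<close> by simp
  then have "L + t * Q = - t"
    unfolding t_def by (simp add: field_simps)
  have "t * L + t\<^sup>2 * Q = t * (L + t * Q)" by (simp add: power2_eq_square algebra_simps)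
  also have "\<dots> = - t\<^sup>2" using \<open>L + t * Q = - t\<close> by (simp add: power2_eq_square)
  moreover have "t \<noteq> 0" using \<open>L \<noteq> 0\<close> \<open>Q + 1 > 0\<close> by (simp add: t_def)
  ultimately show False using nonneg[of t] by simp
qed

lemma le_if_le_minus_small_multiples:
  fixes a b c :: real
  assumes le: "\<And>t. 0 < t \<Longrightarrow> t \<le> 1 \<Longrightarrow> b - t * c \<le> a"
  shows "b \<le> a"
proof (rule LIMSEQ_le_const2)
  show "(\<lambda>n. b - inverse (real (Suc n)) * c) \<longlonglongrightarrow> b"
    using tendsto_diff[OF tendsto_const tendsto_mult_left_zero[OF LIMSEQ_inverse_real_of_nat]] by simp
  show "\<exists>N. \<forall>n\<ge>N. b - inverse (real (Suc n)) * c \<le> a"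
  proof (intro exI allI impI)
    fix n :: nat
    show "b - inverse (real (Suc n)) * c \<le> a" by (rule le) (auto simp: field_simps)
  qed
qed

lemma nonneg_descent:
  fixes s c :: "nat \<Rightarrow> real"
  assumes descent: "\<And>k. s (Suc k) + c k \<le> s k" and "\<And>k. 0 \<le> s k" and "\<And>k. 0 \<le> c k"
  shows "summable c" "s k \<le> s 0"
proof -
  have partial: "(\<Sum>j<n. c j) \<le> s 0 - s n" for n
  proof (induction n)
    case (Suc n)
    then show ?case using descent[of n] by simp
  qed simp
  have "(\<Sum>j<n. c j) \<le> s 0" for n using partial[of n] assms(2)[of n] by linarith
  then show "summable c"
    by (intro summableI_nonneg_bounded[where x = "s 0"]) (use assms(3) in auto)
  show "s k \<le> s 0" using partial[of k] sum_nonneg[of "{..<k}" c] assms(3) by fastforce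
qed

lemma quasi_fejer:
  fixes u p e :: "nat \<Rightarrow> real"
  assumes step: "\<And>k. u (Suc k) + p (Suc k) \<le> u k + e k"
    and lower: "\<And>k. B \<le> u k" and "\<And>k. 0 \<le> p k" and "\<And>k. 0 \<le> e k" and "summable e"
  shows "summable p" "convergent u"
proof -
  define V where "V k = u k + (\<Sum>j<k. p (Suc j)) - (\<Sum>j<k. e j)" for k
  have dec: "decseq V"
    unfolding decseq_Suc_iff V_def using step by (simp add: algebra_simps)
  have e_le: "(\<Sum>j<k. e j) \<le> suminf e" for k
    using assms by (intro sum_le_suminf) auto
  have p_le: "(\<Sum>j<k. p (Suc j)) \<le> V 0 - B + suminf e" for k
    using decseqD[OF dec, of 0 k] lower[of k] e_le[of k] unfolding V_def by simp
  have "B - suminf e \<le> V k" for k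
    using lower[of k] e_le[of k] sum_nonneg[of "{..<k}" "\<lambda>j. p (Suc j)"] assms(3)
    unfolding V_def by fastforce
  then obtain L where "V \<longlonglongrightarrow> L"
    using decseq_convergent[of V "B - suminf e"] dec by blast
  have summable_shift: "summable (\<lambda>j. p (Suc j))"
    by (rule summableI_nonneg_bounded[where x = "V 0 - B + suminf e"]) (use assms p_le in auto)
  then show "summable p" by (simp add: summable_Suc_iff)
  have "(\<lambda>k. V k - (\<Sum>j<k. p (Suc j)) + (\<Sum>j<k. e j)) \<longlonglongrightarrow> L - suminf (\<lambda>j. p (Suc j)) + suminf e"
    by (intro tendsto_intros \<open>V \<longlonglongrightarrow> L\<close> summable_LIMSEQ summable_shift \<open>summable e\<close>)
  moreover have "(\<lambda>k. V k - (\<Sum>j<k. p (Suc j)) + (\<Sum>j<k. e j)) = u"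
    unfolding V_def by auto
  ultimately show "convergent u" unfolding convergent_def by auto
qed

lemma decreasing_summable_mult_index_tendsto_zero:
  fixes s :: "nat \<Rightarrow> real"
  assumes nonneg: "\<And>k. 0 \<le> s k" and dec: "decseq s" and "summable s"
  shows "(\<lambda>k. real k * s k) \<longlonglongrightarrow> 0"
proof (rule LIMSEQ_I)
  fix eps :: real assume "eps > 0"
  then obtain N where N: "\<And>m n. m \<ge> N \<Longrightarrow> norm (sum s {m..<n}) < eps / 2"
    using \<open>summable s\<close> unfolding summable_Cauchy by (meson half_gt_zero)
  show "\<exists>N. \<forall>k\<ge>N. norm (real k * s k - 0) < eps"
  proof (intro exI allI impI)
    fix k assume k: "k \<ge> 2 * N"
    define h where "h = k div 2"
    \<comment> \<open>k s k \<le> 2 (s h + ... + s (k - 1)), a tail of the convergent series\<close>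
    have "real (k - h) * s k = (\<Sum>j\<in>{h..<k}. s k)" by simp
    also have "\<dots> \<le> (\<Sum>j\<in>{h..<k}. s j)"
      using dec by (intro sum_mono) (auto simp: decseq_def)
    also have "\<dots> < eps / 2"
      using N[of h k] k sum_nonneg[of "{h..<k}" s] nonneg by (simp add: h_def)
    finally have "real (k - h) * s k < eps / 2" .
    moreover have "real k \<le> 2 * real (k - h)" unfolding h_def by linarith
    ultimately have "real k * s k < eps"
      using nonneg[of k] mult_right_mono[of "real k" "2 * real (k - h)" "s k"] by linarith
    then show "norm (real k * s k - 0) < eps" using nonneg[of k] by simp
  qed
qed

lemma norm_sum_mult_norm_sq_le:
  fixes v :: "nat \<Rightarrow> 'a::real_normed_vector"
  assumes "p \<le> l"
  shows "(norm (\<Sum>j=p..<l. v (Suc j)) * norm (v l))\<^sup>2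
           \<le> (\<Sum>j=p..<l. (norm (v (Suc j)))\<^sup>2) * (real l * (norm (v l))\<^sup>2)"
proof -
  have "(norm (\<Sum>j=p..<l. v (Suc j)))\<^sup>2 \<le> (\<Sum>j=p..<l. norm (v (Suc j)))\<^sup>2"
    by (intro power_mono norm_sum) simp
  also have "\<dots> \<le> (\<Sum>j=p..<l. (norm (v (Suc j)))\<^sup>2) * card {p..<l}"
    by (rule sum_squared_le_sum_of_squares)
  also have "\<dots> \<le> (\<Sum>j=p..<l. (norm (v (Suc j)))\<^sup>2) * real l"
    by (intro mult_left_mono sum_nonneg) auto
  finally have sum_le: "(norm (\<Sum>j=p..<l. v (Suc j)))\<^sup>2 \<le> (\<Sum>j=p..<l. (norm (v (Suc j)))\<^sup>2) * real l" .
  have "(norm (\<Sum>j=p..<l. v (Suc j)) * norm (v l))\<^sup>2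
        = (norm (\<Sum>j=p..<l. v (Suc j)))\<^sup>2 * (norm (v l))\<^sup>2"
    by (rule power_mult_distrib)
  also have "\<dots> \<le> (\<Sum>j=p..<l. (norm (v (Suc j)))\<^sup>2) * real l * (norm (v l))\<^sup>2"
    by (rule mult_right_mono[OF sum_le]) simp
  finally show ?thesis by (simp only: mult.assoc)
qed

lemma norm_sum_mult_norm_tendsto_zero:
  fixes v :: "nat \<Rightarrow> 'a::real_normed_vector"
  assumes summable: "summable (\<lambda>n. (norm (v n))\<^sup>2)"
    and rate: "(\<lambda>n. real n * (norm (v n))\<^sup>2) \<longlonglongrightarrow> 0"
  shows "(\<lambda>n. norm (\<Sum>j=0..<n. v (Suc j)) * norm (v n)) \<longlonglongrightarrow> 0"
proof -
  define T where "T = (\<Sum>n. (norm (v (Suc n)))\<^sup>2)"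
  have "summable (\<lambda>n. (norm (v (Suc n)))\<^sup>2)"
    using summable summable_Suc_iff[of "\<lambda>n. (norm (v n))\<^sup>2"] by simp
  then have partial_le: "(\<Sum>j=0..<n. (norm (v (Suc j)))\<^sup>2) \<le> T" for n
    unfolding T_def atLeast0LessThan by (intro sum_le_suminf) auto
  have bound: "(norm (\<Sum>j=0..<n. v (Suc j)) * norm (v n))\<^sup>2 \<le> T * (real n * (norm (v n))\<^sup>2)" for n
  proof -
    have "(norm (\<Sum>j=0..<n. v (Suc j)) * norm (v n))\<^sup>2
          \<le> (\<Sum>j=0..<n. (norm (v (Suc j)))\<^sup>2) * (real n * (norm (v n))\<^sup>2)"
      by (rule norm_sum_mult_norm_sq_le) simp
    also have "\<dots> \<le> T * (real n * (norm (v n))\<^sup>2)"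
      by (rule mult_right_mono[OF partial_le]) simp
    finally show ?thesis .
  qed
  have "(\<lambda>n. T * (real n * (norm (v n))\<^sup>2)) \<longlonglongrightarrow> 0"
    using tendsto_mult_right_zero[OF rate] .
  then have "(\<lambda>n. (norm (\<Sum>j=0..<n. v (Suc j)) * norm (v n))\<^sup>2) \<longlonglongrightarrow> 0"
    by (rule Lim_null_comparison[rotated]) (simp add: bound always_eventually)
  then have "(\<lambda>n. sqrt ((norm (\<Sum>j=0..<n. v (Suc j)) * norm (v n))\<^sup>2)) \<longlonglongrightarrow> sqrt 0"
    by (intro tendsto_intros)
  then show ?thesis by simp
qed

lemma norm_sum_mult_norm_eventually_small:
  fixes v :: "nat \<Rightarrow> 'a::real_normed_vector"
  assumes summable: "summable (\<lambda>n. (norm (v n))\<^sup>2)"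
    and rate: "(\<lambda>n. real n * (norm (v n))\<^sup>2) \<longlonglongrightarrow> 0" and "eps > 0"
  shows "\<exists>M. \<forall>p\<ge>M. \<forall>l\<ge>p. norm (\<Sum>j=p..<l. v (Suc j)) * norm (v l) < eps"
proof -
  have "Bseq (\<lambda>n. real n * (norm (v n))\<^sup>2)" using rate by (rule convergent_imp_Bseq[OF convergentI])
  then obtain C where "C > 0" "\<forall>n. norm (real n * (norm (v n))\<^sup>2) \<le> C"
    by (rule BseqE)
  then have C: "C > 0" "real n * (norm (v n))\<^sup>2 \<le> C" for n by simp_all
  have "summable (\<lambda>n. (norm (v (Suc n)))\<^sup>2)"
    using summable summable_Suc_iff[of "\<lambda>n. (norm (v n))\<^sup>2"] by simp
  moreover have "eps\<^sup>2 / C > 0" using \<open>eps > 0\<close> \<open>C > 0\<close> by simp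
  ultimately obtain M where M: "\<forall>p\<ge>M. \<forall>l. norm (\<Sum>j=p..<l. (norm (v (Suc j)))\<^sup>2) < eps\<^sup>2 / C"
    using summable_Cauchy[THEN iffD1] by meson
  have "norm (\<Sum>j=p..<l. v (Suc j)) * norm (v l) < eps" if "p \<ge> M" "l \<ge> p" for p l
  proof -
    have "norm (\<Sum>j=p..<l. (norm (v (Suc j)))\<^sup>2) < eps\<^sup>2 / C" using M \<open>p \<ge> M\<close> by blast
    then have tail: "(\<Sum>j=p..<l. (norm (v (Suc j)))\<^sup>2) < eps\<^sup>2 / C" by (simp add: sum_nonneg)
    have "(norm (\<Sum>j=p..<l. v (Suc j)) * norm (v l))\<^sup>2
          \<le> (\<Sum>j=p..<l. (norm (v (Suc j)))\<^sup>2) * (real l * (norm (v l))\<^sup>2)"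
      by (rule norm_sum_mult_norm_sq_le[OF \<open>l \<ge> p\<close>])
    also have "\<dots> \<le> (\<Sum>j=p..<l. (norm (v (Suc j)))\<^sup>2) * C"
      by (intro mult_left_mono C(2) sum_nonneg) auto
    also have "\<dots> < eps\<^sup>2"
      using mult_strict_right_mono[OF tail \<open>C > 0\<close>] \<open>C > 0\<close> by simp
    finally show ?thesis by (rule power_less_imp_less_base) (use \<open>eps > 0\<close> in simp)
  qed
  then show ?thesis by (intro exI[of _ M]) auto
qed

lemma tendsto_zero_if_summable_norm_sq:
  fixes v :: "nat \<Rightarrow> 'a::real_normed_vector"
  assumes "summable (\<lambda>n. (norm (v n))\<^sup>2)"
  shows "v \<longlonglongrightarrow> 0"
proof -
  have "(\<lambda>n. sqrt ((norm (v n))\<^sup>2)) \<longlonglongrightarrow> sqrt 0"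
    using summable_LIMSEQ_zero[OF assms] by (intro tendsto_intros)
  then show ?thesis by (simp add: tendsto_norm_zero_iff)
qed

lemma inner_sum_tendsto_zero:
  fixes v L :: "nat \<Rightarrow> 'a::real_inner"
  assumes L: "\<And>n. L n = L0 + c *\<^sub>R (\<Sum>j=0..<n. v (Suc j))"
    and summable: "summable (\<lambda>n. (norm (v n))\<^sup>2)"
    and rate: "(\<lambda>n. real n * (norm (v n))\<^sup>2) \<longlonglongrightarrow> 0"
  shows "(\<lambda>n. inner (L n) (v n)) \<longlonglongrightarrow> 0"
proof (rule Lim_null_comparison)
  have "(\<lambda>n. norm (v n)) \<longlonglongrightarrow> 0"
    using tendsto_zero_if_summable_norm_sq[OF summable] by (simp add: tendsto_norm_zero_iff)
  then show "(\<lambda>n. norm L0 * norm (v n) + \<bar>c\<bar> * (norm (\<Sum>j=0..<n. v (Suc j)) * norm (v n))) \<longlonglongrightarrow> 0"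
    using tendsto_add[OF tendsto_mult_right_zero tendsto_mult_right_zero[OF norm_sum_mult_norm_tendsto_zero[OF summable rate]]]
    by simp
  show "\<forall>\<^sub>F n in sequentially. norm (inner (L n) (v n))
          \<le> norm L0 * norm (v n) + \<bar>c\<bar> * (norm (\<Sum>j=0..<n. v (Suc j)) * norm (v n))"
  proof (rule always_eventually, rule allI)
    fix n
    have "norm (inner (L n) (v n)) \<le> norm (L n) * norm (v n)"
      using Cauchy_Schwarz_ineq2 by simp
    also have "\<dots> \<le> (norm L0 + \<bar>c\<bar> * norm (\<Sum>j=0..<n. v (Suc j))) * norm (v n)"
      unfolding L using norm_triangle_ineq[of L0 "c *\<^sub>R (\<Sum>j=0..<n. v (Suc j))"]
      by (intro mult_right_mono) simp_all
    finally show "norm (inner (L n) (v n))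
          \<le> norm L0 * norm (v n) + \<bar>c\<bar> * (norm (\<Sum>j=0..<n. v (Suc j)) * norm (v n))"
      by (simp add: algebra_simps)
  qed
qed

lemma Cauchy_if_dist_le_mult:
  fixes X :: "nat \<Rightarrow> 'a::metric_space" and Y :: "nat \<Rightarrow> 'b::metric_space"
  assumes "Cauchy X" "K > 0" and le: "\<And>m n. m \<ge> N \<Longrightarrow> n \<ge> N \<Longrightarrow> dist (Y m) (Y n) \<le> K * dist (X m) (X n)"
  shows "Cauchy Y"
proof (rule metric_CauchyI)
  fix e :: real assume "e > 0"
  then obtain M where M: "\<forall>m\<ge>M. \<forall>n\<ge>M. dist (X m) (X n) < e / K"
    using metric_CauchyD[OF \<open>Cauchy X\<close>] \<open>K > 0\<close> by (meson divide_pos_pos)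
  have "dist (Y m) (Y n) < e" if "m \<ge> max M N" "n \<ge> max M N" for m n
  proof -
    have "dist (X m) (X n) < e / K" using M that by auto
    then have "K * dist (X m) (X n) < e" using \<open>K > 0\<close> by (simp add: field_simps)
    moreover have "dist (Y m) (Y n) \<le> K * dist (X m) (X n)" using le that by simp
    ultimately show ?thesis by linarith
  qed
  then show "\<exists>M. \<forall>m\<ge>M. \<forall>n\<ge>M. dist (Y m) (Y n) < e" by (intro exI[of _ "max M N"]) auto
qed

lemma lsc_fun_le_limit:
  fixes f :: "'a::metric_space \<Rightarrow> ereal"
  assumes "lsc_fun f" and "g \<longlonglongrightarrow> z" and bound: "\<forall>\<^sub>F k in sequentially. f (g k) \<le> ereal (u k)"
    and "u \<longlonglongrightarrow> U"
  shows "f z \<le> ereal U"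
proof (rule ereal_le_epsilon2)
  fix e :: real assume "e > 0"
  have "\<forall>\<^sub>F k in sequentially. u k < U + e"
    using \<open>u \<longlonglongrightarrow> U\<close> \<open>e > 0\<close> by (intro order_tendstoD(2)) auto
  with bound have "\<forall>\<^sub>F k in sequentially. g k \<in> {v. f v \<le> ereal (U + e)}"
    by eventually_elim (auto elim: order_trans)
  moreover have "closed {v. f v \<le> ereal (U + e)}" using \<open>lsc_fun f\<close> by (simp add: lsc_fun_def)
  ultimately have "z \<in> {v. f v \<le> ereal (U + e)}"
    using \<open>g \<longlonglongrightarrow> z\<close> by (intro Lim_in_closed_set) auto
  then show "f z \<le> ereal U + ereal e" by simp
qed

lemma strongly_convex_prox_subgradient:
  fixes f :: "'a::real_inner \<Rightarrow> ereal"
  assumes sc: "strongly_convex c0 f" and no_minf: "\<And>v. f v \<noteq> -\<infinity>"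
    and prox: "\<And>v. f p - ereal (inner m p) + ereal (rho / 2 * (norm (w - p))\<^sup>2)
                 \<le> f v - ereal (inner m v) + ereal (rho / 2 * (norm (w - v))\<^sup>2)"
    and fp: "f p = ereal fp" and fv: "f v = ereal fv"
  shows "fp + inner (m + rho *\<^sub>R (w - p)) (v - p) + c0 * (norm (v - p))\<^sup>2 \<le> fv"
proof -
  define N where "N = (norm (v - p))\<^sup>2"
  define P where "P = inner m (v - p)"
  define Q where "Q = inner (w - p) (v - p)"
  define NW where "NW = (norm (w - p))\<^sup>2"
  \<comment> \<open>compare p with the point p + t (v - p) of the segment towards v and let t tend to 0\<close>
  have "P + rho * Q + c0 * N - t * ((c0 + rho / 2) * N) \<le> fv - fp" if "0 < t" "t \<le> 1" for t
  proof -
    define yt where "yt = p + t *\<^sub>R (v - p)"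
    have "t *\<^sub>R v + (1 - t) *\<^sub>R p = yt"
      by (simp add: yt_def scaleR_diff_left scaleR_diff_right)
    then have convex: "f yt + ereal (c0 * t * (1 - t) * N) \<le> ereal t * f v + ereal (1 - t) * f p"
      using sc that unfolding strongly_convex_def N_def by (metis less_eq_real_def)
    then obtain fyt where fyt: "f yt = ereal fyt"
      using no_minf[of yt] fp fv by (cases "f yt") auto
    have convex': "fyt + c0 * t * (1 - t) * N \<le> t * fv + (1 - t) * fp"
      using convex unfolding fyt fv fp by simp
    have "fp - inner m p + rho / 2 * NW \<le> fyt - inner m yt + rho / 2 * (norm (w - yt))\<^sup>2"
      using prox[of yt] unfolding fyt fp NW_def by simp
    moreover have "inner m yt = inner m p + t * P"
      unfolding yt_def P_def by (simp add: inner_add_right)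
    moreover have "(norm (w - yt))\<^sup>2 = NW - 2 * t * Q + t\<^sup>2 * N"
    proof -
      have eq: "w - yt = (w - p) + (- t) *\<^sub>R (v - p)" unfolding yt_def by (simp add: algebra_simps)
      show ?thesis unfolding eq norm_add_scaleR_sq Q_def N_def NW_def by simp
    qed
    ultimately have prox': "fp - inner m p + rho / 2 * NW
        \<le> fyt - (inner m p + t * P) + rho / 2 * (NW - 2 * t * Q + t\<^sup>2 * N)"
      by simp
    have "t * (P + rho * Q + c0 * N - t * ((c0 + rho / 2) * N))
        = t * (fv - fp) - (t * fv + (1 - t) * fp - (fyt + c0 * t * (1 - t) * N))
          - ((fyt - (inner m p + t * P) + rho / 2 * (NW - 2 * t * Q + t\<^sup>2 * N))
             - (fp - inner m p + rho / 2 * NW))"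
      by (simp add: field_simps power2_eq_square)
    also have "\<dots> \<le> t * (fv - fp)" using convex' prox' by linarith
    finally show ?thesis using \<open>0 < t\<close> by simp
  qed
  then have "P + rho * Q + c0 * N \<le> fv - fp"
    by (rule le_if_le_minus_small_multiples)
  moreover have "inner (m + rho *\<^sub>R (w - p)) (v - p) = P + rho * Q"
    unfolding P_def Q_def by (simp add: inner_add_left)
  ultimately show ?thesis by (simp add: N_def)
qed

locale admm =
  fixes A :: "'x::{real_inner,complete_space} \<Rightarrow> 'h::{real_inner,complete_space}"
    and W :: "'x \<Rightarrow> 'y::{real_inner,complete_space}"
    and D :: "'x set"
    and f :: "'y \<Rightarrow> ereal"
    and c0 c1 rho1 rho2 :: real
    and b :: 'h
    and xs :: 'x
    and x :: "nat \<Rightarrow> 'x" and y :: "nat \<Rightarrow> 'y"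
    and lam :: "nat \<Rightarrow> 'h" and mu :: "nat \<Rightarrow> 'y"
  assumes A1: "bounded_linear A"
    and A2: "proper_fun f" "lsc_fun f" "c0 > 0" "strongly_convex c0 f"
    and A3: "dd_closed_linear_op D W"
    and A4: "c1 > 0" "\<forall>z\<in>D. (norm (A z))\<^sup>2 + (norm (W z))\<^sup>2 \<ge> c1 * (norm z)\<^sup>2"
    and consistent: "\<exists>z\<in>D. A z = b \<and> f (W z) < \<infinity>"
    and xs_sol: "xs \<in> D" "A xs = b"
      "\<forall>z\<in>D. A z = b \<longrightarrow> f (W xs) \<le> f (W z)"
    and rho: "rho1 > 0" "rho2 > 0"
    and x_step: "\<forall>k. x (Suc k) \<in> D \<and>
       (\<forall>z\<in>D. inner (lam k) (A (x (Suc k))) + inner (mu k) (W (x (Suc k)))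
                 + rho1 / 2 * (norm (A (x (Suc k)) - b))\<^sup>2
                 + rho2 / 2 * (norm (W (x (Suc k)) - y k))\<^sup>2
               \<le> inner (lam k) (A z) + inner (mu k) (W z)
                 + rho1 / 2 * (norm (A z - b))\<^sup>2
                 + rho2 / 2 * (norm (W z - y k))\<^sup>2)"
    and y_step: "\<forall>k. \<forall>v.
       f (y (Suc k)) - ereal (inner (mu k) (y (Suc k)))
         + ereal (rho2 / 2 * (norm (W (x (Suc k)) - y (Suc k)))\<^sup>2)
       \<le> f v - ereal (inner (mu k) v) + ereal (rho2 / 2 * (norm (W (x (Suc k)) - v))\<^sup>2)"
    and lam_step: "\<forall>k. lam (Suc k) = lam k + rho1 *\<^sub>R (A (x (Suc k)) - b)"
    and mu_step: "\<forall>k. mu (Suc k) = mu k + rho2 *\<^sub>R (W (x (Suc k)) - y (Suc k))"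
begin

abbreviation "ys \<equiv> W xs"

definition "freal v = real_of_ereal (f v)"

definition "resA k = A (x k) - b"
definition "resW k = W (x k) - y k"
\<comment> \<open>dy 0 = 0 by truncated subtraction; only dy k with k \<ge> 1 is ever used\<close>
definition "dy k = y k - y (k - 1)"
definition "errW k = ys - W (x k)"
\<comment> \<open>the real form of bregman f (mu k) ys (y k); freal is the junk value real_of_ereal where
  f is infinite, but f is finite at ys and at y k for k \<ge> 1 (f_ys, f_y)\<close>
definition "breg k = freal ys - freal (y k) - inner (mu k) (ys - y k)"

sublocale A: bounded_linear A by (rule A1)

lemma D_subspace: "subspace D"
  using A3 by (simp add: dd_closed_linear_op_def)

lemma W_add_scaleR: "u \<in> D \<Longrightarrow> v \<in> D \<Longrightarrow> W (u + t *\<^sub>R v) = W u + t *\<^sub>R W v"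
  using A3 D_subspace subspace_scale unfolding dd_closed_linear_op_def by metis

lemma W_diff: "u \<in> D \<Longrightarrow> v \<in> D \<Longrightarrow> W (u - v) = W u - W v"
  using W_add_scaleR[of u v "-1"] by simp

lemma x_in_D: "k \<ge> 1 \<Longrightarrow> x k \<in> D"
  using x_step by (cases k) auto

lemma f_eq_freal: "f v \<noteq> \<infinity> \<Longrightarrow> f v = ereal (freal v)"
  using A2(1) unfolding proper_fun_def freal_def by (cases "f v") auto

lemma f_ys: "f ys = ereal (freal ys)"
proof (rule f_eq_freal)
  obtain z where "z \<in> D" "A z = b" "f (W z) < \<infinity>" using consistent by blast
  then show "f ys \<noteq> \<infinity>" using xs_sol(3) by fastforce
qed

lemma f_y: "k \<ge> 1 \<Longrightarrow> f (y k) = ereal (freal (y k))"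
proof (cases k)
  case (Suc j)
  have "f (y (Suc j)) - ereal (inner (mu j) (y (Suc j)))
         + ereal (rho2 / 2 * (norm (W (x (Suc j)) - y (Suc j)))\<^sup>2)
       \<le> f ys - ereal (inner (mu j) ys) + ereal (rho2 / 2 * (norm (W (x (Suc j)) - ys))\<^sup>2)"
    using y_step by blast
  then have "f (y (Suc j)) \<noteq> \<infinity>" using f_ys by auto
  then show ?thesis using Suc f_eq_freal by simp
qed simp

lemma mu_Suc: "mu (Suc k) = mu k + rho2 *\<^sub>R resW (Suc k)"
  using mu_step by (simp add: resW_def)

lemma lam_Suc: "lam (Suc k) = lam k + rho1 *\<^sub>R resA (Suc k)"
  using lam_step by (simp add: resA_def)

lemma subgradient_ineq:
  assumes "k \<ge> 1" and "f v = ereal (freal v)"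
  shows "freal (y k) + inner (mu k) (v - y k) + c0 * (norm (v - y k))\<^sup>2 \<le> freal v"
proof -
  obtain j where k: "k = Suc j" using \<open>k \<ge> 1\<close> by (cases k) auto
  have "\<And>v. f v \<noteq> -\<infinity>" using A2(1) by (simp add: proper_fun_def)
  moreover have "mu k = mu j + rho2 *\<^sub>R (W (x (Suc j)) - y (Suc j))" using mu_step k by simp
  ultimately show ?thesis
    using strongly_convex_prox_subgradient[OF A2(4) _ _ f_y assms(2)] y_step k by auto
qed

lemma subgradient_monotone:
  assumes "n \<ge> 1" "m \<ge> 1"
  shows "2 * c0 * (norm (y m - y n))\<^sup>2 \<le> inner (mu m - mu n) (y m - y n)"
  using subgradient_ineq[OF assms(1) f_y[OF assms(2)]] subgradient_ineq[OF assms(2) f_y[OF assms(1)]]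
  by (simp add: inner_diff_left inner_diff_right norm_minus_commute)

lemma x_optimality:
  assumes "k \<ge> 1" and z: "z \<in> D"
  shows "inner (lam k) (A z) + inner (mu k + rho2 *\<^sub>R dy k) (W z) = 0"
proof -
  obtain j where k: "k = Suc j" using \<open>k \<ge> 1\<close> by (cases k) auto
  define a1 where "a1 = A (x k) - b"
  define r1 where "r1 = W (x k) - y j"
  define L where "L = inner (lam j) (A z) + inner (mu j) (W z) + rho1 * inner a1 (A z) + rho2 * inner r1 (W z)"
  define Q where "Q = rho1 / 2 * (norm (A z))\<^sup>2 + rho2 / 2 * (norm (W z))\<^sup>2"
  have xk: "x k \<in> D" using x_in_D \<open>k \<ge> 1\<close> by simp
  \<comment> \<open>the x-objective increases by t L + t^2 Q along x k + t z\<close>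
  have "t * L + t\<^sup>2 * Q \<ge> 0" for t
  proof -
    have "x k + t *\<^sub>R z \<in> D" using xk z D_subspace by (simp add: subspace_add subspace_scale)
    then have "inner (lam j) (A (x k)) + inner (mu j) (W (x k))
                 + rho1 / 2 * (norm a1)\<^sup>2 + rho2 / 2 * (norm r1)\<^sup>2
               \<le> inner (lam j) (A (x k + t *\<^sub>R z)) + inner (mu j) (W (x k + t *\<^sub>R z))
                 + rho1 / 2 * (norm (A (x k + t *\<^sub>R z) - b))\<^sup>2
                 + rho2 / 2 * (norm (W (x k + t *\<^sub>R z) - y j))\<^sup>2"
      using x_step k unfolding a1_def r1_def by blast
    also have "A (x k + t *\<^sub>R z) - b = a1 + t *\<^sub>R A z"
      by (simp add: a1_def A.add A.scaleR)
    also have "W (x k + t *\<^sub>R z) - y j = r1 + t *\<^sub>R W z"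
      by (simp add: r1_def W_add_scaleR[OF xk z])
    finally have "inner (lam j) (A (x k)) + inner (mu j) (W (x k))
                 + rho1 / 2 * (norm a1)\<^sup>2 + rho2 / 2 * (norm r1)\<^sup>2
               \<le> inner (lam j) (A (x k)) + t * inner (lam j) (A z) + (inner (mu j) (W (x k)) + t * inner (mu j) (W z))
                 + rho1 / 2 * ((norm a1)\<^sup>2 + 2 * t * inner a1 (A z) + t\<^sup>2 * (norm (A z))\<^sup>2)
                 + rho2 / 2 * ((norm r1)\<^sup>2 + 2 * t * inner r1 (W z) + t\<^sup>2 * (norm (W z))\<^sup>2)"
      unfolding W_add_scaleR[OF xk z] A.add A.scaleR norm_add_scaleR_sq inner_add_right inner_scaleR_right .
    moreover have "inner (lam j) (A (x k)) + t * inner (lam j) (A z) + (inner (mu j) (W (x k)) + t * inner (mu j) (W z))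
                 + rho1 / 2 * ((norm a1)\<^sup>2 + 2 * t * inner a1 (A z) + t\<^sup>2 * (norm (A z))\<^sup>2)
                 + rho2 / 2 * ((norm r1)\<^sup>2 + 2 * t * inner r1 (W z) + t\<^sup>2 * (norm (W z))\<^sup>2)
              - (inner (lam j) (A (x k)) + inner (mu j) (W (x k))
                 + rho1 / 2 * (norm a1)\<^sup>2 + rho2 / 2 * (norm r1)\<^sup>2) = t * L + t\<^sup>2 * Q"
      unfolding L_def Q_def by (simp add: field_simps power2_eq_square)
    ultimately show ?thesis by linarith
  qed
  then have "L = 0" by (rule linear_coeff_zero_if_quadratic_nonneg[rotated]) (use rho in \<open>simp add: Q_def\<close>)
  moreover have "lam k = lam j + rho1 *\<^sub>R a1" using lam_step k by (simp add: a1_def)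
  moreover have "mu k + rho2 *\<^sub>R dy k = mu j + rho2 *\<^sub>R r1"
    using mu_step k by (simp add: r1_def dy_def algebra_simps)
  ultimately show ?thesis unfolding L_def by (simp add: inner_add_left)
qed

lemma x_optimality_diff:
  assumes "p \<ge> 1" "q \<ge> 1" "z \<in> D"
  shows "inner (lam q - lam p) (A z) + inner (mu q - mu p) (W z) + rho2 * inner (dy q - dy p) (W z) = 0"
  using x_optimality[OF assms(1,3)] x_optimality[OF assms(2,3)]
  by (simp add: inner_add_left inner_diff_left algebra_simps)

definition "energy k = rho1 / 2 * (norm (resA k))\<^sup>2 + rho2 / 2 * (norm (resW k))\<^sup>2 + rho2 / 2 * (norm (dy k))\<^sup>2"

lemma energy_nonneg: "energy k \<ge> 0"
  using rho unfolding energy_def by simp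

lemma energy_decrease:
  assumes "k \<ge> 1"
  shows "energy (Suc k) + 2 * c0 * (norm (dy (Suc k)))\<^sup>2 \<le> energy k"
proof -
  let ?a = "resA k" and ?a' = "resA (Suc k)" and ?r = "resW k" and ?r' = "resW (Suc k)"
    and ?d = "dy k" and ?d' = "dy (Suc k)"
  have identity: "rho1 / 2 * (norm a)\<^sup>2 + rho2 / 2 * (norm r)\<^sup>2 + rho2 / 2 * (norm d)\<^sup>2
     - (rho1 / 2 * (norm a')\<^sup>2 + rho2 / 2 * (norm r')\<^sup>2 + rho2 / 2 * (norm d')\<^sup>2) - rho2 * inner r' d'
     + (rho1 * inner a' (a' - a) + rho2 * inner r' (r' - r + d') + rho2 * inner (d' - d) (r' - r + d'))
   = rho1 / 2 * (norm (a' - a))\<^sup>2 + rho2 / 2 * (norm (r' - r + (d' - d)))\<^sup>2"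
    for a a' :: 'h and r r' d d' :: 'y
    unfolding power2_norm_eq_inner
    by (simp add: inner_diff_left inner_diff_right inner_add_left inner_add_right inner_commute field_simps)
  have xk: "x k \<in> D" "x (Suc k) \<in> D" using x_in_D assms by auto
  then have "x (Suc k) - x k \<in> D" using D_subspace by (simp add: subspace_diff)
  moreover have "A (x (Suc k) - x k) = ?a' - ?a" by (simp add: A.diff resA_def)
  moreover have "W (x (Suc k) - x k) = ?r' - ?r + ?d'"
    using W_diff[OF xk(2,1)] by (simp add: resW_def dy_def)
  ultimately have "rho1 * inner ?a' (?a' - ?a) + rho2 * inner ?r' (?r' - ?r + ?d')
     + rho2 * inner (?d' - ?d) (?r' - ?r + ?d') = 0"
    using x_optimality_diff[OF assms, of "Suc k" "x (Suc k) - x k"] by (simp add: lam_Suc mu_Suc)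
  then have "energy k - energy (Suc k) - rho2 * inner ?r' ?d'
     = rho1 / 2 * (norm (?a' - ?a))\<^sup>2 + rho2 / 2 * (norm (?r' - ?r + (?d' - ?d)))\<^sup>2"
    using identity[of ?a ?r ?d ?a' ?r' ?d'] unfolding energy_def by simp
  moreover have "2 * c0 * (norm ?d')\<^sup>2 \<le> rho2 * inner ?r' ?d'"
    using subgradient_monotone[OF assms, of "Suc k"] by (simp add: mu_Suc dy_def)
  moreover have "0 \<le> rho1 / 2 * (norm (?a' - ?a))\<^sup>2 + rho2 / 2 * (norm (?r' - ?r + (?d' - ?d)))\<^sup>2"
    using rho by simp
  ultimately show ?thesis by linarith
qed

lemma dy_sq_summable: "summable (\<lambda>k. (norm (dy k))\<^sup>2)"
  and energy_le_first: "k \<ge> 1 \<Longrightarrow> energy k \<le> energy 1"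
proof -
  note descent = nonneg_descent[of "\<lambda>k. energy (Suc k)" "\<lambda>k. 2 * c0 * (norm (dy (Suc (Suc k))))\<^sup>2"]
  have "summable (\<lambda>k. 2 * c0 * (norm (dy (Suc (Suc k))))\<^sup>2)"
    using descent(1) energy_decrease energy_nonneg A2(3) by simp
  then have "summable (\<lambda>k. (norm (dy (Suc (Suc k))))\<^sup>2)"
    using summable_cmult_iff[of "2 * c0"] A2(3) by simp
  then show "summable (\<lambda>k. (norm (dy k))\<^sup>2)"
    by (simp add: summable_Suc_iff[of "\<lambda>k. (norm (dy (Suc k)))\<^sup>2"] summable_Suc_iff[of "\<lambda>k. (norm (dy k))\<^sup>2"])
  show "energy k \<le> energy 1" if "k \<ge> 1"
    using descent(2)[of "k - 1"] energy_decrease energy_nonneg A2(3) that by simp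
qed

lemma breg_ge: "k \<ge> 1 \<Longrightarrow> c0 * (norm (ys - y k))\<^sup>2 \<le> breg k"
  using subgradient_ineq[OF _ f_ys] unfolding breg_def by fastforce

lemma breg_decrease:
  assumes "k \<ge> 1"
  shows "breg (Suc k) + c0 * (norm (dy (Suc k)))\<^sup>2 + rho1 * (norm (resA (Suc k)))\<^sup>2
           + rho2 * (norm (resW (Suc k)))\<^sup>2
         \<le> breg k + rho2 * inner (dy (Suc k) - dy k) (errW (Suc k))"
proof -
  have xk: "x (Suc k) \<in> D" using x_in_D by simp
  then have "xs - x (Suc k) \<in> D" using xs_sol(1) D_subspace by (simp add: subspace_diff)
  moreover have "A (xs - x (Suc k)) = - resA (Suc k)" by (simp add: A.diff resA_def xs_sol(2))
  moreover have "W (xs - x (Suc k)) = errW (Suc k)" by (simp add: W_diff[OF xs_sol(1) xk] errW_def)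
  ultimately have opt: "- rho1 * (norm (resA (Suc k)))\<^sup>2 + rho2 * inner (resW (Suc k)) (errW (Suc k))
     + rho2 * inner (dy (Suc k) - dy k) (errW (Suc k)) = 0"
    using x_optimality_diff[OF assms, of "Suc k" "xs - x (Suc k)"] by (simp add: lam_Suc mu_Suc power2_norm_eq_inner)
  have "freal (y k) + inner (mu k) (y (Suc k) - y k) + c0 * (norm (dy (Suc k)))\<^sup>2 \<le> freal (y (Suc k))"
    using subgradient_ineq[OF assms f_y] by (simp add: dy_def)
  moreover have "ys - y (Suc k) = errW (Suc k) + resW (Suc k)" by (simp add: errW_def resW_def)
  ultimately show ?thesis
    using opt unfolding breg_def mu_Suc
    by (simp add: inner_add_left inner_add_right inner_diff_right power2_norm_eq_inner algebra_simps)
qed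

\<comment> \<open>the inner product term telescopes the error term of breg_decrease; the residual term
  absorbs what Young's inequality leaves over\<close>
definition "lyap k = breg k - rho2 * inner (dy k) (errW k) + rho2 / 4 * (norm (resW k))\<^sup>2"

lemma lyap_step:
  assumes "k \<ge> 1"
  shows "lyap (Suc k) + (rho1 * (norm (resA (Suc k)))\<^sup>2 + rho2 / 2 * (norm (resW (Suc k)))\<^sup>2)
         \<le> lyap k + rho2 * (5 / 2 * (norm (dy k))\<^sup>2 + 1 / 2 * (norm (dy (Suc k)))\<^sup>2)"
proof -
  have errW_diff: "errW k - errW (Suc k) = resW (Suc k) - resW k + dy (Suc k)"
    using W_diff[of "x (Suc k)" "x k"] x_in_D assms by (simp add: errW_def resW_def dy_def)
  have "inner (dy (Suc k) - dy k) (errW (Suc k)) - inner (dy (Suc k)) (errW (Suc k))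
          + inner (dy k) (errW k)
      = inner (dy k) (errW k - errW (Suc k))"
    by (simp add: inner_diff_left inner_diff_right)
  also have "\<dots> = inner (dy k) (resW (Suc k)) + inner (dy k) (- resW k) + inner (dy k) (dy (Suc k))"
    unfolding errW_diff by (simp add: inner_diff_right inner_add_right)
  also have "\<dots> \<le> 5 / 2 * (norm (dy k))\<^sup>2 + 1 / 2 * (norm (dy (Suc k)))\<^sup>2
                  + (norm (resW (Suc k)))\<^sup>2 / 4 + (norm (resW k))\<^sup>2 / 4"
    using inner_le_Young[of 1 "dy k" "resW (Suc k)"] inner_le_Young[of 1 "dy k" "- resW k"]
      inner_le_half_sq[of "dy k" "dy (Suc k)"]
    by simp
  finally have "rho2 * (inner (dy (Suc k) - dy k) (errW (Suc k)) - inner (dy (Suc k)) (errW (Suc k))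
                 + inner (dy k) (errW k))
      \<le> rho2 * (5 / 2 * (norm (dy k))\<^sup>2 + 1 / 2 * (norm (dy (Suc k)))\<^sup>2
                 + (norm (resW (Suc k)))\<^sup>2 / 4 + (norm (resW k))\<^sup>2 / 4)"
    using rho(2) by (intro mult_left_mono) auto
  moreover have "c0 * (norm (dy (Suc k)))\<^sup>2 \<ge> 0" using A2(3) by simp
  ultimately show ?thesis using breg_decrease[OF assms] unfolding lyap_def by (simp add: algebra_simps)
qed

definition "sq_bound = 2 * energy 1 / rho2"

lemma dy_sq_le: "k \<ge> 1 \<Longrightarrow> (norm (dy k))\<^sup>2 \<le> sq_bound"
  and resW_sq_le: "k \<ge> 1 \<Longrightarrow> (norm (resW k))\<^sup>2 \<le> sq_bound"
  using energy_le_first rho unfolding sq_bound_def energy_def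
  by (simp_all add: field_simps, smt (verit) zero_le_power2 mult_nonneg_nonneg)+

lemma rho2_inner_dy_errW_le:
  assumes "k \<ge> 1" and "eps > 0"
  shows "rho2 * inner (dy k) (errW k) \<le> eps * (norm (ys - y k))\<^sup>2 + (rho2\<^sup>2 / (4 * eps) + rho2) * sq_bound"
proof -
  have "ys - y k = errW k + resW k" by (simp add: errW_def resW_def)
  then have "rho2 * inner (dy k) (errW k) = rho2 * inner (ys - y k) (dy k) + rho2 * inner (dy k) (- resW k)"
    by (simp add: inner_add_left inner_commute algebra_simps)
  also have "\<dots> \<le> rho2 * ((eps / rho2) * (norm (ys - y k))\<^sup>2 + (norm (dy k))\<^sup>2 / (4 * (eps / rho2)))
                   + rho2 * ((norm (dy k))\<^sup>2 / 2 + (norm (resW k))\<^sup>2 / 2)"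
    using inner_le_Young[of "eps / rho2" "ys - y k" "dy k"] inner_le_half_sq[of "dy k" "- resW k"] rho assms(2)
    by (intro add_mono mult_left_mono) auto
  also have "\<dots> = eps * (norm (ys - y k))\<^sup>2 + (rho2\<^sup>2 / (4 * eps) + rho2 / 2) * (norm (dy k))\<^sup>2
                   + rho2 / 2 * (norm (resW k))\<^sup>2"
    using rho assms(2) by (simp add: field_simps power2_eq_square)
  also have "\<dots> \<le> eps * (norm (ys - y k))\<^sup>2 + (rho2\<^sup>2 / (4 * eps) + rho2 / 2) * sq_bound + rho2 / 2 * sq_bound"
    using dy_sq_le[OF assms(1)] resW_sq_le[OF assms(1)] rho assms(2)
    by (intro add_mono mult_left_mono order_refl) auto
  finally show ?thesis by (simp add: algebra_simps)
qed

lemma lyap_lower: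
  assumes "k \<ge> 1"
  shows "- ((rho2\<^sup>2 / (4 * c0) + rho2) * sq_bound) \<le> lyap k"
proof -
  have "0 \<le> rho2 / 4 * (norm (resW k))\<^sup>2" using rho by simp
  then show ?thesis
    using rho2_inner_dy_errW_le[OF assms A2(3)] breg_ge[OF assms] unfolding lyap_def by linarith
qed

lemma breg_le_lyap:
  assumes "k \<ge> 1"
  shows "breg k \<le> 2 * lyap k + 2 * ((rho2\<^sup>2 / (2 * c0) + rho2) * sq_bound)"
proof -
  have "rho2 * inner (dy k) (errW k) \<le> c0 / 2 * (norm (ys - y k))\<^sup>2 + (rho2\<^sup>2 / (2 * c0) + rho2) * sq_bound"
    using rho2_inner_dy_errW_le[OF assms, of "c0 / 2"] A2(3) by simp
  then have "2 * (rho2 * inner (dy k) (errW k))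
      \<le> 2 * (c0 / 2 * (norm (ys - y k))\<^sup>2 + (rho2\<^sup>2 / (2 * c0) + rho2) * sq_bound)"
    by simp
  also have "\<dots> = c0 * (norm (ys - y k))\<^sup>2 + 2 * ((rho2\<^sup>2 / (2 * c0) + rho2) * sq_bound)"
    by (simp add: algebra_simps)
  finally have "2 * (rho2 * inner (dy k) (errW k))
      \<le> c0 * (norm (ys - y k))\<^sup>2 + 2 * ((rho2\<^sup>2 / (2 * c0) + rho2) * sq_bound)" .
  moreover have "0 \<le> rho2 / 4 * (norm (resW k))\<^sup>2" using rho by simp
  moreover have "\<And>B I N R K. 2 * I \<le> N + 2 * (K::real) \<Longrightarrow> 0 \<le> R \<Longrightarrow> N \<le> B \<Longrightarrow> B \<le> 2 * (B - I + R) + 2 * K"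
    by argo
  ultimately show ?thesis using breg_ge[OF assms] unfolding lyap_def by blast
qed

lemma residuals_sq_summable: "summable (\<lambda>k. rho1 * (norm (resA k))\<^sup>2 + rho2 / 2 * (norm (resW k))\<^sup>2)"
  and lyap_convergent: "convergent lyap"
proof -
  define P where "P k = rho1 * (norm (resA k))\<^sup>2 + rho2 / 2 * (norm (resW k))\<^sup>2" for k
  define e where "e k = rho2 * (5 / 2 * (norm (dy k))\<^sup>2 + 1 / 2 * (norm (dy (Suc k)))\<^sup>2)" for k
  have "summable e"
    using dy_sq_summable summable_Suc_iff[of "\<lambda>k. (norm (dy k))\<^sup>2"] unfolding e_def
    by (intro summable_mult summable_add) simp_all
  then have "summable (\<lambda>k. e (Suc k))" by (subst summable_Suc_iff)
  moreover have "lyap (Suc (Suc k)) + P (Suc (Suc k)) \<le> lyap (Suc k) + e (Suc k)" for k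
    using lyap_step[of "Suc k"] unfolding P_def e_def by simp
  moreover have "- ((rho2\<^sup>2 / (4 * c0) + rho2) * sq_bound) \<le> lyap (Suc k)" for k
    using lyap_lower by simp
  ultimately have "summable (\<lambda>k. P (Suc k))" "convergent (\<lambda>k. lyap (Suc k))"
    using quasi_fejer[of "\<lambda>k. lyap (Suc k)" "\<lambda>k. P (Suc k)" "\<lambda>k. e (Suc k)"] rho
    unfolding P_def e_def by auto
  then have "summable P" "convergent lyap"
    using summable_Suc_iff[of P] convergent_Suc_iff[of lyap] by simp_all
  then show "summable (\<lambda>k. rho1 * (norm (resA k))\<^sup>2 + rho2 / 2 * (norm (resW k))\<^sup>2)" "convergent lyap"
    unfolding P_def[abs_def] .
qed

lemma resA_sq_summable: "summable (\<lambda>k. (norm (resA k))\<^sup>2)"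
proof (rule summable_comparison_test')
  show "summable (\<lambda>k. (rho1 * (norm (resA k))\<^sup>2 + rho2 / 2 * (norm (resW k))\<^sup>2) / rho1)"
    using residuals_sq_summable by (rule summable_divide)
  show "norm ((norm (resA k))\<^sup>2) \<le> (rho1 * (norm (resA k))\<^sup>2 + rho2 / 2 * (norm (resW k))\<^sup>2) / rho1" for k
    using rho by (simp add: field_simps)
qed

lemma resW_sq_summable: "summable (\<lambda>k. (norm (resW k))\<^sup>2)"
proof (rule summable_comparison_test')
  show "summable (\<lambda>k. (rho1 * (norm (resA k))\<^sup>2 + rho2 / 2 * (norm (resW k))\<^sup>2) / (rho2 / 2))"
    using residuals_sq_summable by (rule summable_divide)
  show "norm ((norm (resW k))\<^sup>2) \<le> (rho1 * (norm (resA k))\<^sup>2 + rho2 / 2 * (norm (resW k))\<^sup>2) / (rho2 / 2)" for k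
    using rho by (simp add: field_simps)
qed

lemma index_mult_energy_tendsto_zero: "(\<lambda>k. real k * energy k) \<longlonglongrightarrow> 0"
proof -
  have summable: "summable (\<lambda>k. energy (Suc k))"
    using resA_sq_summable resW_sq_summable dy_sq_summable unfolding energy_def
    by (subst summable_Suc_iff) (intro summable_add summable_mult)
  have "decseq (\<lambda>k. energy (Suc k))"
    unfolding decseq_Suc_iff using energy_decrease A2(3) by (smt (verit) le_add1 plus_1_eq_Suc zero_le_power2 mult_nonneg_nonneg)
  then have "(\<lambda>k. real k * energy (Suc k)) \<longlonglongrightarrow> 0"
    using energy_nonneg summable by (intro decreasing_summable_mult_index_tendsto_zero)
  then have "(\<lambda>k. real k * energy (Suc k) + energy (Suc k)) \<longlonglongrightarrow> 0 + 0"
    using summable_LIMSEQ_zero[OF summable] by (rule tendsto_add)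
  then have "(\<lambda>k. real (Suc k) * energy (Suc k)) \<longlonglongrightarrow> 0" by (simp add: algebra_simps)
  then show ?thesis by (rule LIMSEQ_imp_Suc)
qed

lemma index_mult_resA_sq_tendsto_zero: "(\<lambda>k. real k * (norm (resA k))\<^sup>2) \<longlonglongrightarrow> 0"
proof (rule Lim_null_comparison)
  show "(\<lambda>k. 2 / rho1 * (real k * energy k)) \<longlonglongrightarrow> 0"
    using tendsto_mult_right_zero[OF index_mult_energy_tendsto_zero] .
  have bound: "(norm (resA k))\<^sup>2 \<le> 2 / rho1 * energy k" for k
    using rho by (simp add: energy_def field_simps)
  show "\<forall>\<^sub>F k in sequentially. norm (real k * (norm (resA k))\<^sup>2) \<le> 2 / rho1 * (real k * energy k)"
  proof (intro always_eventually allI)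
    fix k
    have "real k * (norm (resA k))\<^sup>2 \<le> real k * (2 / rho1 * energy k)"
      by (rule mult_left_mono[OF bound]) simp
    then show "norm (real k * (norm (resA k))\<^sup>2) \<le> 2 / rho1 * (real k * energy k)"
      by (simp add: algebra_simps)
  qed
qed

lemma index_mult_resW_sq_tendsto_zero: "(\<lambda>k. real k * (norm (resW k))\<^sup>2) \<longlonglongrightarrow> 0"
proof (rule Lim_null_comparison)
  show "(\<lambda>k. 2 / rho2 * (real k * energy k)) \<longlonglongrightarrow> 0"
    using tendsto_mult_right_zero[OF index_mult_energy_tendsto_zero] .
  have bound: "(norm (resW k))\<^sup>2 \<le> 2 / rho2 * energy k" for k
    using rho by (simp add: energy_def field_simps)
  show "\<forall>\<^sub>F k in sequentially. norm (real k * (norm (resW k))\<^sup>2) \<le> 2 / rho2 * (real k * energy k)"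
  proof (intro always_eventually allI)
    fix k
    have "real k * (norm (resW k))\<^sup>2 \<le> real k * (2 / rho2 * energy k)"
      by (rule mult_left_mono[OF bound]) simp
    then show "norm (real k * (norm (resW k))\<^sup>2) \<le> 2 / rho2 * (real k * energy k)"
      by (simp add: algebra_simps)
  qed
qed

lemma lam_eq_sum: "p \<le> l \<Longrightarrow> lam l = lam p + rho1 *\<^sub>R (\<Sum>j=p..<l. resA (Suc j))"
  by (induction l rule: dec_induct) (simp_all add: lam_Suc scaleR_add_right)

lemma mu_eq_sum: "p \<le> l \<Longrightarrow> mu l = mu p + rho2 *\<^sub>R (\<Sum>j=p..<l. resW (Suc j))"
  by (induction l rule: dec_induct) (simp_all add: mu_Suc scaleR_add_right)

lemma inner_lam_resA_tendsto_zero: "(\<lambda>k. inner (lam k) (resA k)) \<longlonglongrightarrow> 0"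
proof (rule inner_sum_tendsto_zero[OF _ resA_sq_summable index_mult_resA_sq_tendsto_zero])
  show "lam n = lam 0 + rho1 *\<^sub>R (\<Sum>j=0..<n. resA (Suc j))" for n by (rule lam_eq_sum) simp
qed

lemma inner_mu_resW_tendsto_zero: "(\<lambda>k. inner (mu k) (resW k)) \<longlonglongrightarrow> 0"
proof (rule inner_sum_tendsto_zero[OF _ resW_sq_summable index_mult_resW_sq_tendsto_zero])
  show "mu n = mu 0 + rho2 *\<^sub>R (\<Sum>j=0..<n. resW (Suc j))" for n by (rule mu_eq_sum) simp
qed

lemma errW_bounded: obtains B where "\<And>k. k \<ge> 1 \<Longrightarrow> norm (errW k) \<le> B"
proof -
  obtain L where "0 < L" and L: "\<forall>k. norm (lyap k) \<le> L"
    using convergent_imp_Bseq[OF lyap_convergent] by (rule BseqE)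
  define C where "C = 2 * L + 2 * ((rho2\<^sup>2 / (2 * c0) + rho2) * sq_bound)"
  have "norm (errW k) \<le> sqrt (C / c0) + sqrt sq_bound" if "k \<ge> 1" for k
  proof -
    have "lyap k \<le> L" using L abs_le_D1 by (metis real_norm_def)
    then have "c0 * (norm (ys - y k))\<^sup>2 \<le> C"
      using breg_ge[OF that] breg_le_lyap[OF that] unfolding C_def by linarith
    then have "(norm (ys - y k))\<^sup>2 \<le> C / c0"
      by (simp add: pos_le_divide_eq[OF A2(3)] mult.commute)
    then have "norm (ys - y k) \<le> sqrt (C / c0)" by (rule real_le_rsqrt)
    moreover have "norm (resW k) \<le> sqrt sq_bound"
      using resW_sq_le[OF that] by (rule real_le_rsqrt)
    moreover have "norm (errW k) \<le> norm (ys - y k) + norm (resW k)"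
      unfolding errW_def resW_def using norm_triangle_ineq4[of "ys - y k" "resW k"]
      by (simp add: resW_def)
    ultimately show ?thesis by linarith
  qed
  then show ?thesis using that by blast
qed

lemma inner_dy_errW_tendsto_zero: "(\<lambda>k. inner (dy k) (errW k)) \<longlonglongrightarrow> 0"
proof -
  obtain B where B: "\<And>k. k \<ge> 1 \<Longrightarrow> norm (errW k) \<le> B" using errW_bounded by blast
  have "(\<lambda>k. norm (dy k)) \<longlonglongrightarrow> 0"
    using tendsto_zero_if_summable_norm_sq[OF dy_sq_summable] by (simp add: tendsto_norm_zero_iff)
  then have "(\<lambda>k. norm (dy k) * B) \<longlonglongrightarrow> 0" by (rule tendsto_mult_left_zero)
  moreover have "norm (inner (dy k) (errW k)) \<le> norm (dy k) * B" if "k \<ge> 1" for k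
    using Cauchy_Schwarz_ineq2[of "dy k" "errW k"] mult_left_mono[OF B[OF that], of "norm (dy k)"]
    by simp
  then have "\<forall>\<^sub>F k in sequentially. norm (inner (dy k) (errW k)) \<le> norm (dy k) * B"
    unfolding eventually_sequentially by blast
  ultimately show ?thesis by (rule Lim_null_comparison[rotated])
qed

lemma breg_convergent: "convergent breg"
proof -
  obtain L where "lyap \<longlonglongrightarrow> L" using lyap_convergent by (auto simp: convergent_def)
  moreover have "(\<lambda>k. (norm (resW k))\<^sup>2) \<longlonglongrightarrow> 0" using resW_sq_summable by (rule summable_LIMSEQ_zero)
  ultimately have "(\<lambda>k. lyap k - rho2 / 4 * (norm (resW k))\<^sup>2 + rho2 * inner (dy k) (errW k))
      \<longlonglongrightarrow> L - rho2 / 4 * 0 + rho2 * 0"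
    by (intro tendsto_intros inner_dy_errW_tendsto_zero)
  moreover have "(\<lambda>k. lyap k - rho2 / 4 * (norm (resW k))\<^sup>2 + rho2 * inner (dy k) (errW k)) = breg"
    by (auto simp: lyap_def)
  ultimately show ?thesis unfolding convergent_def by auto
qed

lemma inner_mu_eq:
  assumes "k \<ge> 1"
  shows "inner (mu k) (ys - y k) = inner (lam k) (resA k) + inner (mu k) (resW k) - rho2 * inner (dy k) (errW k)"
proof -
  have xk: "x k \<in> D" using x_in_D assms .
  then have "xs - x k \<in> D" using xs_sol(1) D_subspace by (simp add: subspace_diff)
  moreover have "A (xs - x k) = - resA k" by (simp add: A.diff resA_def xs_sol(2))
  moreover have "W (xs - x k) = errW k" by (simp add: W_diff[OF xs_sol(1) xk] errW_def)
  ultimately have "- inner (lam k) (resA k) + inner (mu k) (errW k) + rho2 * inner (dy k) (errW k) = 0"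
    using x_optimality[OF assms, of "xs - x k"] by (simp add: inner_add_left)
  moreover have "inner (mu k) (ys - y k) = inner (mu k) (errW k) + inner (mu k) (resW k)"
    by (simp add: errW_def resW_def inner_diff_right)
  ultimately show ?thesis by linarith
qed

lemma inner_mu_tendsto_zero: "(\<lambda>k. inner (mu k) (ys - y k)) \<longlonglongrightarrow> 0"
proof -
  have "(\<lambda>k. inner (lam k) (resA k) + inner (mu k) (resW k) - rho2 * inner (dy k) (errW k))
      \<longlonglongrightarrow> 0"
    using tendsto_diff[OF tendsto_add[OF inner_lam_resA_tendsto_zero inner_mu_resW_tendsto_zero]
        tendsto_mult_right_zero[OF inner_dy_errW_tendsto_zero]]
    by simp
  then have "(\<lambda>k. inner (lam (Suc k)) (resA (Suc k)) + inner (mu (Suc k)) (resW (Suc k))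
      - rho2 * inner (dy (Suc k)) (errW (Suc k))) \<longlonglongrightarrow> 0"
    by (rule LIMSEQ_Suc)
  then have "(\<lambda>k. inner (mu (Suc k)) (ys - y (Suc k))) \<longlonglongrightarrow> 0"
    by (simp add: inner_mu_eq)
  then show ?thesis by (rule LIMSEQ_imp_Suc)
qed

lemma norm_y_diff_sq_le:
  assumes "p \<ge> 1" and "l \<ge> 1"
  shows "c0 * (norm (y l - y p))\<^sup>2
         \<le> breg p - breg l - (inner (lam l - lam p) (resA l) + inner (mu l - mu p) (resW l))
           + rho2 * inner (dy l - dy p) (errW l)"
proof -
  have xl: "x l \<in> D" using x_in_D assms(2) .
  then have "xs - x l \<in> D" using xs_sol(1) D_subspace by (simp add: subspace_diff)
  moreover have "A (xs - x l) = - resA l" by (simp add: A.diff resA_def xs_sol(2))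
  moreover have "W (xs - x l) = errW l" by (simp add: W_diff[OF xs_sol(1) xl] errW_def)
  ultimately have "- inner (lam l - lam p) (resA l) + inner (mu l - mu p) (errW l)
      + rho2 * inner (dy l - dy p) (errW l) = 0"
    using x_optimality_diff[OF assms, of "xs - x l"] by simp
  moreover have "ys - y l = errW l + resW l" by (simp add: errW_def resW_def)
  moreover have "freal (y p) + inner (mu p) (y l - y p) + c0 * (norm (y l - y p))\<^sup>2 \<le> freal (y l)"
    using subgradient_ineq[OF assms(1) f_y[OF assms(2)]] .
  ultimately show ?thesis
    unfolding breg_def by (simp add: inner_diff_left inner_diff_right inner_add_right algebra_simps)
qed

lemma abs_inner_multiplier_diff_le:
  assumes "p \<le> l"
  shows "\<bar>inner (lam l - lam p) (resA l) + inner (mu l - mu p) (resW l)\<bar>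
         \<le> rho1 * (norm (\<Sum>j=p..<l. resA (Suc j)) * norm (resA l))
           + rho2 * (norm (\<Sum>j=p..<l. resW (Suc j)) * norm (resW l))"
proof -
  have "\<bar>inner (lam l - lam p) (resA l)\<bar> \<le> rho1 * (norm (\<Sum>j=p..<l. resA (Suc j)) * norm (resA l))"
    using lam_eq_sum[OF assms] Cauchy_Schwarz_ineq2[of "\<Sum>j=p..<l. resA (Suc j)" "resA l"] rho
    by (simp add: abs_mult)
  moreover have "\<bar>inner (mu l - mu p) (resW l)\<bar> \<le> rho2 * (norm (\<Sum>j=p..<l. resW (Suc j)) * norm (resW l))"
    using mu_eq_sum[OF assms] Cauchy_Schwarz_ineq2[of "\<Sum>j=p..<l. resW (Suc j)" "resW l"] rho
    by (simp add: abs_mult)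
  ultimately show ?thesis by linarith
qed

lemma y_diff_sq_le:
  assumes "1 \<le> p" "p \<le> l" and B: "norm (errW l) \<le> B"
  shows "c0 * (norm (y l - y p))\<^sup>2
         \<le> \<bar>breg p - breg l\<bar> + rho1 * (norm (\<Sum>j=p..<l. resA (Suc j)) * norm (resA l))
           + rho2 * (norm (\<Sum>j=p..<l. resW (Suc j)) * norm (resW l))
           + rho2 * B * norm (dy l) + rho2 * B * norm (dy p)"
proof -
  have "inner (dy l - dy p) (errW l) \<le> norm (dy l - dy p) * norm (errW l)"
    by (rule norm_cauchy_schwarz)
  also have "\<dots> \<le> (norm (dy l) + norm (dy p)) * B"
    using B by (intro mult_mono norm_triangle_ineq4) auto
  finally have "rho2 * inner (dy l - dy p) (errW l) \<le> rho2 * ((norm (dy l) + norm (dy p)) * B)"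
    using rho by (intro mult_left_mono) auto
  then have "rho2 * inner (dy l - dy p) (errW l) \<le> rho2 * B * norm (dy l) + rho2 * B * norm (dy p)"
    by (simp add: algebra_simps)
  then show ?thesis
    using norm_y_diff_sq_le[of p l] abs_inner_multiplier_diff_le[OF assms(2)] assms(1,2)
      abs_ge_minus_self[of "inner (lam l - lam p) (resA l) + inner (mu l - mu p) (resW l)"]
      abs_ge_self[of "breg p - breg l"]
    by linarith
qed

lemma y_Cauchy: "Cauchy y"
proof (rule CauchyI')
  fix e :: real assume "e > 0"
  define \<delta> where "\<delta> = c0 * e\<^sup>2 / 4"
  have "\<delta> > 0" using \<open>e > 0\<close> A2(3) by (simp add: \<delta>_def)
  obtain M1 where M1: "\<forall>p\<ge>M1. \<forall>l\<ge>M1. norm (breg p - breg l) < \<delta>"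
    using Cauchy_iff[THEN iffD1, OF convergent_Cauchy[OF breg_convergent]] \<open>\<delta> > 0\<close> by blast
  obtain M2 where M2: "\<forall>p\<ge>M2. \<forall>l\<ge>p. norm (\<Sum>j=p..<l. resA (Suc j)) * norm (resA l) < \<delta> / rho1"
    using norm_sum_mult_norm_eventually_small[OF resA_sq_summable index_mult_resA_sq_tendsto_zero, of "\<delta> / rho1"]
      \<open>\<delta> > 0\<close> rho by (meson divide_pos_pos)
  obtain M3 where M3: "\<forall>p\<ge>M3. \<forall>l\<ge>p. norm (\<Sum>j=p..<l. resW (Suc j)) * norm (resW l) < \<delta> / rho2"
    using norm_sum_mult_norm_eventually_small[OF resW_sq_summable index_mult_resW_sq_tendsto_zero, of "\<delta> / rho2"]
      \<open>\<delta> > 0\<close> rho by (meson divide_pos_pos)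
  obtain B where B: "\<And>k. k \<ge> 1 \<Longrightarrow> norm (errW k) \<le> B" using errW_bounded by blast
  have "(\<lambda>k. rho2 * B * norm (dy k)) \<longlonglongrightarrow> 0"
    using tendsto_zero_if_summable_norm_sq[OF dy_sq_summable]
    by (intro tendsto_mult_right_zero) (simp add: tendsto_norm_zero_iff)
  then obtain M4 where M4: "\<forall>k\<ge>M4. rho2 * B * norm (dy k) < \<delta> / 2"
    using order_tendstoD(2)[of _ 0 sequentially "\<delta> / 2"] \<open>\<delta> > 0\<close>
    unfolding eventually_sequentially by auto
  define M where "M = max (max M1 M2) (max M3 (max M4 1))"
  have "dist (y m) (y n) < e" if "m \<ge> M" "n > m" for m n
  proof -
    have m: "m \<ge> 1" "m \<ge> M1" "m \<ge> M2" "m \<ge> M3" "m \<ge> M4" and n: "n \<ge> 1" "n \<ge> M1" "n \<ge> M4"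
      using that by (auto simp: M_def)
    have "rho1 * (norm (\<Sum>j=m..<n. resA (Suc j)) * norm (resA n)) < \<delta>"
      using M2 m(3) that(2) rho(1) by (simp add: pos_less_divide_eq mult.commute)
    moreover have "rho2 * (norm (\<Sum>j=m..<n. resW (Suc j)) * norm (resW n)) < \<delta>"
      using M3 m(4) that(2) rho(2) by (simp add: pos_less_divide_eq mult.commute)
    moreover have "\<bar>breg m - breg n\<bar> < \<delta>" using M1 m n by auto
    moreover have "rho2 * B * norm (dy n) < \<delta> / 2" "rho2 * B * norm (dy m) < \<delta> / 2"
      using M4 m n by auto
    ultimately have "c0 * (norm (y n - y m))\<^sup>2 < 4 * \<delta>"
      using y_diff_sq_le[OF m(1) less_imp_le[OF that(2)] B[OF n(1)]] by linarith
    then have "c0 * (norm (y n - y m))\<^sup>2 < c0 * e\<^sup>2" unfolding \<delta>_def by simp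
    then have "(norm (y n - y m))\<^sup>2 < e\<^sup>2" using A2(3) by simp
    then show ?thesis
      using \<open>e > 0\<close> by (simp add: dist_norm norm_minus_commute power_less_imp_less_base)
  qed
  then show "\<exists>M. \<forall>m\<ge>M. \<forall>n>m. dist (y m) (y n) < e" by blast
qed

lemma dist_x_le:
  assumes "m \<ge> 1" "n \<ge> 1"
  shows "dist (x m) (x n) \<le> (1 / sqrt c1) * dist (A (x m), W (x m)) (A (x n), W (x n))"
proof -
  have "x m - x n \<in> D" using x_in_D assms D_subspace by (simp add: subspace_diff)
  then have "c1 * (norm (x m - x n))\<^sup>2 \<le> (norm (A (x m - x n)))\<^sup>2 + (norm (W (x m - x n)))\<^sup>2"
    using A4(2) by blast
  also have "\<dots> = (norm (A (x m) - A (x n)))\<^sup>2 + (norm (W (x m) - W (x n)))\<^sup>2"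
    using W_diff x_in_D assms by (simp add: A.diff)
  finally have "sqrt (c1 * (norm (x m - x n))\<^sup>2) \<le> norm ((A (x m), W (x m)) - (A (x n), W (x n)))"
    by (simp add: norm_Pair)
  then have "sqrt c1 * norm (x m - x n) \<le> dist (A (x m), W (x m)) (A (x n), W (x n))"
    using A4(1) by (simp add: real_sqrt_mult dist_norm)
  then show ?thesis using A4(1) by (simp add: dist_norm field_simps)
qed

lemma iterates_converge:
  obtains xb where "xb \<in> D" "A xb = b" "x \<longlonglongrightarrow> xb" "y \<longlonglongrightarrow> W xb" "(\<lambda>k. W (x k)) \<longlonglongrightarrow> W xb"
proof -
  obtain yb where y: "y \<longlonglongrightarrow> yb" using Cauchy_convergent[OF y_Cauchy] by (auto simp: convergent_def)
  have "(\<lambda>k. y k + resW k) \<longlonglongrightarrow> yb + 0"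
    using y tendsto_zero_if_summable_norm_sq[OF resW_sq_summable] by (rule tendsto_add)
  then have Wx: "(\<lambda>k. W (x k)) \<longlonglongrightarrow> yb" by (simp add: resW_def)
  have "(\<lambda>k. resA k + b) \<longlonglongrightarrow> 0 + b"
    using tendsto_zero_if_summable_norm_sq[OF resA_sq_summable] tendsto_const by (rule tendsto_add)
  then have Ax: "(\<lambda>k. A (x k)) \<longlonglongrightarrow> b" by (simp add: resA_def)
  have "Cauchy (\<lambda>k. (A (x k), W (x k)))"
    using tendsto_Pair[OF Ax Wx] by (rule convergent_Cauchy[OF convergentI])
  \<comment> \<open>by (A4), x is Lipschitz in the convergent sequence (A x, W x)\<close>
  then have "Cauchy x"
    by (rule Cauchy_if_dist_le_mult[OF _ _ dist_x_le]) (use A4(1) in simp)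
  then obtain xb where x: "x \<longlonglongrightarrow> xb" using Cauchy_convergent by (auto simp: convergent_def)
  have closed: "closed {(z, W z) | z. z \<in> D}" using A3 by (simp add: dd_closed_linear_op_def)
  have "\<forall>\<^sub>F k in sequentially. (x k, W (x k)) \<in> {(z, W z) | z. z \<in> D}"
    using x_in_D unfolding eventually_sequentially by blast
  then have "(xb, yb) \<in> {(z, W z) | z. z \<in> D}"
    by (rule Lim_in_closed_set[OF closed _ _ tendsto_Pair[OF x Wx]]) simp
  then have "xb \<in> D" "W xb = yb" by auto
  moreover have "A xb = b" using A.tendsto[OF x] Ax LIMSEQ_unique by blast
  ultimately show ?thesis using that x y Wx by blast
qed

lemma limit_eq_solution:
  assumes "y \<longlonglongrightarrow> W xb" "xb \<in> D" "A xb = b"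
  shows "W xb = ys"
proof -
  have "\<forall>\<^sub>F k in sequentially. f (y k) \<le> ereal (freal ys - c0 * (norm (ys - y k))\<^sup>2 - inner (mu k) (ys - y k))"
    unfolding eventually_sequentially using f_y breg_ge unfolding breg_def by force
  moreover have "(\<lambda>k. freal ys - c0 * (norm (ys - y k))\<^sup>2 - inner (mu k) (ys - y k))
      \<longlonglongrightarrow> freal ys - c0 * (norm (ys - W xb))\<^sup>2 - 0"
    by (intro tendsto_intros assms(1) inner_mu_tendsto_zero)
  ultimately have "f (W xb) \<le> ereal (freal ys - c0 * (norm (ys - W xb))\<^sup>2)"
    using lsc_fun_le_limit[OF A2(2) assms(1)] by simp
  moreover have "f ys \<le> f (W xb)" using xs_sol(3) assms(2,3) by blast
  ultimately have "ereal (freal ys) \<le> ereal (freal ys - c0 * (norm (ys - W xb))\<^sup>2)"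
    unfolding f_ys by (rule order_trans[rotated])
  then have "c0 * (norm (ys - W xb))\<^sup>2 \<le> 0" by simp
  then show ?thesis using A2(3) by (simp add: mult_le_0_iff)
qed

lemma solution_unique:
  assumes "z \<in> D" "A z = b" "W z = ys"
  shows "z = xs"
proof -
  have "c1 * (norm (z - xs))\<^sup>2 \<le> (norm (A (z - xs)))\<^sup>2 + (norm (W (z - xs)))\<^sup>2"
    using A4(2) assms(1) xs_sol(1) D_subspace by (simp add: subspace_diff)
  also have "\<dots> = 0" using assms xs_sol by (simp add: A.diff W_diff)
  finally show ?thesis using A4(1) by (simp add: mult_le_0_iff)
qed

lemma y_tendsto: "y \<longlonglongrightarrow> ys"
  and x_tendsto: "x \<longlonglongrightarrow> xs"
  and W_x_tendsto: "(\<lambda>k. W (x k)) \<longlonglongrightarrow> ys"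
proof -
  obtain xb where "xb \<in> D" "A xb = b" "x \<longlonglongrightarrow> xb" "y \<longlonglongrightarrow> W xb" "(\<lambda>k. W (x k)) \<longlonglongrightarrow> W xb"
    by (rule iterates_converge)
  moreover have "W xb = ys" using limit_eq_solution calculation by blast
  moreover have "xb = xs" using solution_unique calculation by blast
  ultimately show "y \<longlonglongrightarrow> ys" "x \<longlonglongrightarrow> xs" "(\<lambda>k. W (x k)) \<longlonglongrightarrow> ys" by simp_all
qed

lemma breg_tendsto_zero: "breg \<longlonglongrightarrow> 0"
proof -
  obtain L where L: "breg \<longlonglongrightarrow> L" using breg_convergent by (auto simp: convergent_def)
  have "\<forall>\<^sub>F k in sequentially. f (y k) \<le> ereal (freal ys - breg k - inner (mu k) (ys - y k))"
    unfolding eventually_sequentially using f_y unfolding breg_def by force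
  moreover have "(\<lambda>k. freal ys - breg k - inner (mu k) (ys - y k)) \<longlonglongrightarrow> freal ys - L - 0"
    by (intro tendsto_intros L inner_mu_tendsto_zero)
  ultimately have "f ys \<le> ereal (freal ys - L)"
    using lsc_fun_le_limit[OF A2(2) y_tendsto] by simp
  then have "L \<le> 0" using f_ys by simp
  moreover have "0 \<le> breg k" if "k \<ge> 1" for k
    using breg_ge[OF that] A2(3) by (meson order_trans zero_le_power2 mult_nonneg_nonneg less_imp_le)
  then have "0 \<le> L" using L by (intro LIMSEQ_le_const) auto
  ultimately show ?thesis using L by simp
qed

lemma f_y_tendsto: "(\<lambda>k. f (y k)) \<longlonglongrightarrow> f ys"
proof -
  have "(\<lambda>k. freal ys - breg k - inner (mu k) (ys - y k)) \<longlonglongrightarrow> freal ys - 0 - 0"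
    by (intro tendsto_intros breg_tendsto_zero inner_mu_tendsto_zero)
  then have "(\<lambda>k. freal (y k)) \<longlonglongrightarrow> freal ys" by (simp add: breg_def)
  then have "(\<lambda>k. ereal (freal (y (Suc k)))) \<longlonglongrightarrow> ereal (freal ys)"
    by (intro LIMSEQ_Suc) (simp add: lim_ereal)
  then have "(\<lambda>k. f (y (Suc k))) \<longlonglongrightarrow> f ys" using f_y f_ys by simp
  then show ?thesis by (rule LIMSEQ_imp_Suc)
qed

lemma bregman_tendsto_zero: "(\<lambda>k. bregman f (mu k) ys (y k)) \<longlonglongrightarrow> 0"
proof -
  have "bregman f (mu (Suc k)) ys (y (Suc k)) = ereal (breg (Suc k))" for k
    unfolding bregman_def breg_def using f_y[of "Suc k"] f_ys by simp
  moreover have "(\<lambda>k. ereal (breg (Suc k))) \<longlonglongrightarrow> ereal 0"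
    using LIMSEQ_Suc[OF breg_tendsto_zero] by (simp add: lim_ereal)
  ultimately have "(\<lambda>k. bregman f (mu (Suc k)) ys (y (Suc k))) \<longlonglongrightarrow> 0"
    by (simp add: zero_ereal_def)
  then show ?thesis by (rule LIMSEQ_imp_Suc)
qed

end

theorem theorem2p7:
  fixes A :: "'x::{real_inner,complete_space} \<Rightarrow> 'h::{real_inner,complete_space}"
    and W :: "'x \<Rightarrow> 'y::{real_inner,complete_space}"
    and D :: "'x set"
    and f :: "'y \<Rightarrow> ereal"
    and c0 c1 rho1 rho2 :: real
    and b :: 'h
    and xs :: 'x
    and x :: "nat \<Rightarrow> 'x" and y :: "nat \<Rightarrow> 'y"
    and lam :: "nat \<Rightarrow> 'h" and mu :: "nat \<Rightarrow> 'y"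
  assumes A1: "bounded_linear A"
    and A2: "proper_fun f" "lsc_fun f" "c0 > 0" "strongly_convex c0 f"
    and A3: "dd_closed_linear_op D W"
    and A4: "c1 > 0" "\<forall>z\<in>D. (norm (A z))\<^sup>2 + (norm (W z))\<^sup>2 \<ge> c1 * (norm z)\<^sup>2"
    and consistent: "\<exists>z\<in>D. A z = b \<and> f (W z) < \<infinity>"
    and xs_sol: "xs \<in> D" "A xs = b"
      "\<forall>z\<in>D. A z = b \<longrightarrow> f (W xs) \<le> f (W z)"
    and rho: "rho1 > 0" "rho2 > 0"
    and x_step: "\<forall>k. x (Suc k) \<in> D \<and>
       (\<forall>z\<in>D. inner (lam k) (A (x (Suc k))) + inner (mu k) (W (x (Suc k)))
                 + rho1 / 2 * (norm (A (x (Suc k)) - b))\<^sup>2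
                 + rho2 / 2 * (norm (W (x (Suc k)) - y k))\<^sup>2
               \<le> inner (lam k) (A z) + inner (mu k) (W z)
                 + rho1 / 2 * (norm (A z - b))\<^sup>2
                 + rho2 / 2 * (norm (W z - y k))\<^sup>2)"
    and y_step: "\<forall>k. \<forall>v.
       f (y (Suc k)) - ereal (inner (mu k) (y (Suc k)))
         + ereal (rho2 / 2 * (norm (W (x (Suc k)) - y (Suc k)))\<^sup>2)
       \<le> f v - ereal (inner (mu k) v) + ereal (rho2 / 2 * (norm (W (x (Suc k)) - v))\<^sup>2)"
    and lam_step: "\<forall>k. lam (Suc k) = lam k + rho1 *\<^sub>R (A (x (Suc k)) - b)"
    and mu_step: "\<forall>k. mu (Suc k) = mu k + rho2 *\<^sub>R (W (x (Suc k)) - y (Suc k))"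
  shows "x \<longlonglongrightarrow> xs \<and> y \<longlonglongrightarrow> W xs \<and> (\<lambda>k. W (x k)) \<longlonglongrightarrow> W xs
         \<and> (\<lambda>k. f (y k)) \<longlonglongrightarrow> f (W xs)
         \<and> (\<lambda>k. bregman f (mu k) (W xs) (y k)) \<longlonglongrightarrow> 0"
proof -
  interpret admm A W D f c0 c1 rho1 rho2 b xs x y lam mu
    unfolding admm_def using assms by (intro conjI) assumption+
  show ?thesis
    using x_tendsto y_tendsto W_x_tendsto f_y_tendsto bregman_tendsto_zero by blast
qed

end
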